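(* Let $q=p^n$ be a prime power and $d$ a positive divisor of $q-1$. Then $G(q,d)$ has a GI-automorphism (equivalently, has a GI-extension) if and only if there exists an integer $l\ge 0$ with $p^l\equiv -1 \pmod d$.
   Context: $G(q,d)$ is the group of affine maps $\{x\mapsto ax+b:\ a,b\in\mathbb{F}_q,\ a^d=1\}$ under composition; equivalently $G(q,d)\cong C_p^n\rtimes C_d$, where $C_p^n$ is the additive group of $\mathbb{F}_q$ and $C_d\le\mathbb{F}_q^\times$ acts by multiplication. A GI-automorphism of a group $G$ is an automorphism $\sigma$ such that $G$ is generated by $\{g\in G:\sigma(g)=g^{-1}\}$. Given a group $G'$ with a normal subgroup $G$ of index $2$, $G'$ is a GI-extension of $G$ if $G'$ is generated by involutions not contained in $G$. *)

theory Defs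
  imports "HOL-Algebra.Algebra" "HOL-Number_Theory.Cong"
begin

definition affine_group :: "nat \<Rightarrow> ('a::field \<Rightarrow> 'a) monoid" where
  "affine_group d = \<lparr> carrier = {f. \<exists>a b. a ^ d = 1 \<and> f = (\<lambda>x. a * x + b)},
                      monoid.mult = (\<lambda>f g. f \<circ> g),
                      one = id \<rparr>"

definition GI_automorphism :: "('g, 'b) monoid_scheme \<Rightarrow> ('g \<Rightarrow> 'g) \<Rightarrow> bool" where
  "GI_automorphism G \<sigma> \<longleftrightarrow>
     \<sigma> \<in> iso G G \<and>
     generate G {g \<in> carrier G. \<sigma> g = inv\<^bsub>G\<^esub> g} = carrier G"

end

theory Submission
  imports Defs "HOL-Number_Theory.Residues" "HOL-Computational_Algebra.Polynomial"
    "HOL-Decision_Procs.Algebra_Aux"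
begin

text \<open>
  An automorphism \<sigma> of G(q,d) maps translations to translations, since d is prime to p.
  This yields an additive bijection \<psi> of F_q, and conjugating translations by dilations gives
  \<psi>(a b) = \<alpha>(a) \<psi>(b), where \<alpha>(a) is the slope of \<sigma>(x \<mapsto> a x). The elements inverted by \<sigma> lie in
  the subgroup on which \<sigma> inverts the slope; if they generate G(q,d), then \<psi>(z b) = z^-1 \<psi>(b)
  for a root of unity z of order d. Applying \<psi> to P(z) = 0, where the product P of X - y over
  the Galois conjugates y = z^(p^i) has coefficients in F_p, shows that z^-1 = z^(p^l) for
  some l, i.e. p^l \<equiv> -1 (mod d).

  Conversely, if p^l \<equiv> -1 (mod d), then \<tau>(x) = x^(p^l) inverts the d-th roots of unity, and
  extending one vector at a time over the fixed field of \<tau>^2 produces an additive involution \<psi>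
  with \<psi>(e u) = \<tau>(e) \<psi>(u) for all e in that field. Then (x \<mapsto> a x + b) \<mapsto> (x \<mapsto> a^-1 x - \<psi>(b)) is
  an automorphism inverting all dilations and all translations by fixed points of \<psi>, and these
  generate G(q,d) as soon as some d-th root of unity z has z^2 \<noteq> 1; for d \<le> 2 one takes \<psi> = id.
\<close>

section \<open>Finite fields\<close>

lemma card_UNIV_field_ge_2: "2 \<le> card (UNIV :: 'a::{finite,field} set)"
proof -
  have "card {0::'a, 1} \<le> card (UNIV :: 'a set)"
    by (rule card_mono) auto
  then show ?thesis
    by simp
qed

lemma pos_if_dvd_card_minus_one:
  assumes "d dvd card (UNIV :: 'a::{finite,field} set) - 1"
  shows "d > 0"
  using assms card_UNIV_field_ge_2[where 'a='a] by (intro Nat.gr0I) simp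

lemma prime_CHAR_finite_field: "Factorial_Ring.prime CHAR('a::{finite,field})"
  using finite_imp_CHAR_pos[OF finite_UNIV] by (rule prime_CHAR_semidom)

lemma CHAR_eq_prime_of_card:
  assumes "Factorial_Ring.prime p" and "card (UNIV :: 'a::{finite,field} set) = p ^ n"
  shows "CHAR('a) = p"
proof -
  have "CHAR('a) dvd p ^ n"
    using CHAR_dvd_CARD[where 'a='a] assms(2) by simp
  then have "CHAR('a) dvd p"
    by (rule prime_dvd_power[OF prime_CHAR_finite_field])
  then show ?thesis
    by (rule primes_dvd_imp_eq[OF prime_CHAR_finite_field assms(1)])
qed

lemma power_eq_one_if_coprime:
  fixes a :: "'a::monoid_mult"
  assumes "coprime d p" and "d > 0" and "a ^ d = 1" and "a ^ p = 1"
  shows "a = 1"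
proof -
  obtain x y where "d * x = p * y + 1"
    using bezout_nat[of d p] assms(1,2) by auto
  then have "a ^ (d * x) = a ^ (p * y) * a"
    by (simp add: power_commutes)
  then show ?thesis
    using assms(3,4) by (simp add: power_mult)
qed

lemma (in group) ord_eq_order_if_generates:
  assumes "finite (carrier G)" and "a \<in> carrier G" and "carrier G = {a [^] i | i::nat. i \<in> UNIV}"
  shows "ord a = Coset.order G"
proof -
  have "carrier G = (\<lambda>i. a [^] i) ` {0 .. ord a - 1}"
    using assms(3) ord_elems[OF assms(1,2)] by (simp only: Setcompr_eq_image)
  then have "Coset.order G \<le> card {0 .. ord a - 1}"
    unfolding Coset.order_def by (metis card_image_le finite_atLeastAtMost)
  also have "\<dots> = ord a"
    using ord_ge_1[OF assms(1,2)] by simp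
  finally show ?thesis
    using ord_le_group_order[OF assms(1,2)] by simp
qed

lemma field_cring_class_ops: "field (cring_class_ops :: 'a::field ring)"
proof -
  interpret cring "cring_class_ops :: 'a ring"
    by (rule cring_class)
  have "\<exists>y. y * x = 1 \<and> x * y = 1" if "x \<noteq> 0" for x :: 'a
    using that by (intro exI[of _ "inverse x"]) simp
  then show ?thesis
    by unfold_locales (auto simp: Units_def cring_class_ops_def)
qed

lemma cring_class_ops_power: "x [^]\<^bsub>cring_class_ops\<^esub> (i::nat) = (x::'a::comm_ring_1) ^ i"
  by (induction i) (simp_all add: cring_class_ops_def)

text \<open>The multiplicative group is cyclic of order \<open>q - 1\<close>, so it has an element of order \<open>d\<close>.\<close>
lemma finite_field_root_of_unity:
  assumes "d dvd card (UNIV :: 'a::{finite,field} set) - 1"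
  shows "\<exists>z::'a. \<forall>j. z ^ j = 1 \<longleftrightarrow> d dvd j"
proof -
  let ?R = "cring_class_ops :: 'a ring"
  let ?M = "Multiplicative_Group.mult_of ?R"
  interpret M: group ?M
    by (rule field.field_mult_group[OF field_cring_class_ops])
  have fin: "finite (carrier ?M)"
    by simp
  have order_M: "Coset.order ?M = card (UNIV :: 'a set) - 1"
    by (simp add: field.order_mult_of[OF field_cring_class_ops] Coset.order_def cring_class_ops_def)
  have "finite (carrier ?R)"
    by simp
  then obtain a where a: "a \<in> carrier ?M" and gen: "carrier ?M = {a [^]\<^bsub>?R\<^esub> i | i::nat. i \<in> UNIV}"
    using field.finite_field_mult_group_has_gen[OF field_cring_class_ops] by blast
  have ord_a: "M.ord a = Coset.order ?M"
    by (rule M.ord_eq_order_if_generates[OF fin a]) (unfold Multiplicative_Group.nat_pow_mult_of, rule gen)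
  obtain e where e: "Coset.order ?M = d * e"
    using assms order_M by (auto elim: dvdE)
  have "Coset.order ?M > 0"
    using order_M card_UNIV_field_ge_2[where 'a='a] by simp
  with e have "e > 0"
    by (cases e) auto
  with e \<open>Coset.order ?M > 0\<close> have "M.ord (a [^]\<^bsub>?M\<^esub> e) = d"
    by (simp add: M.ord_pow_gen[OF a] ord_a gcd_nat.absorb2)
  then have "(a [^]\<^bsub>?M\<^esub> e) [^]\<^bsub>?M\<^esub> j = \<one>\<^bsub>?M\<^esub> \<longleftrightarrow> d dvd j" for j
    using M.pow_eq_id[OF M.nat_pow_closed[OF a]] by simp
  then have "(a ^ e) ^ j = \<one>\<^bsub>?M\<^esub> \<longleftrightarrow> d dvd j" for j
    by (simp only: Multiplicative_Group.nat_pow_mult_of cring_class_ops_power)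
  moreover have "\<one>\<^bsub>?M\<^esub> = (1::'a)"
    by (simp add: cring_class_ops_def)
  ultimately show ?thesis
    by auto
qed

section \<open>Field endomorphisms and Galois conjugates\<close>

locale field_endomorphism = additive \<tau> for \<tau> :: "'a::field \<Rightarrow> 'a" +
  assumes mult: "\<tau> (x * y) = \<tau> x * \<tau> y"
    and one [simp]: "\<tau> 1 = 1"
begin

declare zero [simp]

lemma inverse: "\<tau> (inverse x) = inverse (\<tau> x)"
proof (cases "x = 0")
  case False
  then have "\<tau> x * \<tau> (inverse x) = 1"
    by (simp flip: mult)
  then show ?thesis
    by (rule inverse_unique[symmetric])
qed simp

lemma eq_0_iff [simp]: "\<tau> x = 0 \<longleftrightarrow> x = 0"
  using inverse[of x] by (metis inverse_zero mult mult_zero_left one right_inverse zero_neq_one zero)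

lemma inj: "inj \<tau>"
  by (rule injI) (metis diff eq_0_iff right_minus_eq)

lemma of_nat [simp]: "\<tau> (of_nat k) = of_nat k"
  by (induction k) (simp_all add: add)

lemma map_poly_mult: "map_poly \<tau> (P * Q) = map_poly \<tau> P * map_poly \<tau> Q"
  by (rule poly_eqI) (simp add: coeff_map_poly coeff_mult sum mult)

lemma map_poly_prod: "map_poly \<tau> (\<Prod>i\<in>A. f i) = (\<Prod>i\<in>A. map_poly \<tau> (f i))"
  by (induction A rule: infinite_finite_induct) (simp_all add: map_poly_mult map_poly_1 pCons_one)

end

lemma field_endomorphism_frobenius:
  assumes "Factorial_Ring.prime CHAR('a::field)"
  shows "field_endomorphism (\<lambda>x::'a. x ^ (CHAR('a) ^ m))"
  by unfold_locales (simp_all add: assms freshmans_dream' power_mult_distrib)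

text \<open>The prime field consists of the roots of \<open>X\<^sup>p - X\<close>.\<close>
lemma power_CHAR_eq_self_imp_of_nat:
  fixes x :: "'a::field"
  assumes prime: "Factorial_Ring.prime CHAR('a)" and fixed: "x ^ CHAR('a) = x"
  shows "x \<in> range of_nat"
proof -
  let ?p = "CHAR('a)"
  interpret frobenius: field_endomorphism "\<lambda>x::'a. x ^ ?p"
    using field_endomorphism_frobenius[OF prime, of 1] by simp
  define P :: "'a poly" where "P = monom 1 ?p - [:0, 1:]"
  have p2: "?p \<ge> 2"
    using prime prime_ge_2_nat by blast
  then have "coeff P ?p = 1"
    by (simp add: P_def coeff_monom coeff_pCons split: nat.split)
  then have "P \<noteq> 0"
    by auto
  have roots: "{y. poly P y = 0} = {y. y ^ ?p = y}"
    by (auto simp: P_def poly_monom)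
  have "degree P \<le> ?p"
    unfolding P_def using p2 degree_diff_le_max[of "monom (1::'a) ?p" "[:0, 1:]"]
    by (simp add: degree_monom_eq)
  then have card_roots: "card {y::'a. y ^ ?p = y} \<le> ?p"
    using card_poly_roots_bound[OF \<open>P \<noteq> 0\<close>] roots by simp
  have finite_roots: "finite {y::'a. y ^ ?p = y}"
    using poly_roots_finite[OF \<open>P \<noteq> 0\<close>] roots by simp
  have "card (of_nat ` {..<?p} :: 'a set) = ?p"
    by (subst card_image) (auto intro!: inj_onI simp: of_nat_eq_iff_cong_CHAR cong_def)
  moreover have "of_nat ` {..<?p} \<subseteq> {y::'a. y ^ ?p = y}"
    by auto
  ultimately have "of_nat ` {..<?p} = {y::'a. y ^ ?p = y}"
    using card_roots finite_roots by (intro card_seteq) auto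
  then show ?thesis
    using fixed by auto
qed

definition conjugates :: "'a::field \<Rightarrow> 'a set" where
  "conjugates z = range (\<lambda>i::nat. z ^ (CHAR('a) ^ i))"

lemma frobenius_image_conjugates:
  "(\<lambda>x. x ^ CHAR('a)) ` conjugates z = conjugates (z::'a::{finite,field})"
proof (rule card_subset_eq)
  interpret frobenius: field_endomorphism "\<lambda>x::'a. x ^ CHAR('a)"
    using field_endomorphism_frobenius[OF prime_CHAR_finite_field, of 1] by simp
  show "(\<lambda>x. x ^ CHAR('a)) ` conjugates z \<subseteq> conjugates z"
  proof
    fix y assume "y \<in> (\<lambda>x. x ^ CHAR('a)) ` conjugates z"
    then obtain i where "y = (z ^ (CHAR('a) ^ i)) ^ CHAR('a)"
      by (auto simp: conjugates_def)
    then have "y = z ^ (CHAR('a) ^ Suc i)"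
      by (simp add: mult.commute flip: power_mult)
    then show "y \<in> conjugates z"
      unfolding conjugates_def by (rule range_eqI)
  qed
  show "card ((\<lambda>x. x ^ CHAR('a)) ` conjugates z) = card (conjugates z)"
    using frobenius.inj by (simp add: card_image inj_on_subset)
qed simp

lemma coeff_conjugates_poly:
  "coeff (\<Prod>y\<in>conjugates z. [:- y, 1:]) i \<in> range (of_nat :: nat \<Rightarrow> 'a::{finite,field})"
proof (rule power_CHAR_eq_self_imp_of_nat[OF prime_CHAR_finite_field])
  interpret frobenius: field_endomorphism "\<lambda>x::'a. x ^ CHAR('a)"
    using field_endomorphism_frobenius[OF prime_CHAR_finite_field, of 1] by simp
  let ?P = "\<Prod>y\<in>conjugates z. [:- y, 1:]"
  have "map_poly (\<lambda>x. x ^ CHAR('a)) ?P = (\<Prod>y\<in>conjugates z. [:- (y ^ CHAR('a)), 1:])"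
    by (simp add: frobenius.map_poly_prod map_poly_pCons frobenius.minus)
  also have "\<dots> = (\<Prod>y\<in>(\<lambda>x. x ^ CHAR('a)) ` conjugates z. [:- y, 1:])"
    using frobenius.inj by (simp add: prod.reindex inj_on_subset)
  finally have "map_poly (\<lambda>x. x ^ CHAR('a)) ?P = ?P"
    by (simp add: frobenius_image_conjugates)
  then have "coeff (map_poly (\<lambda>x. x ^ CHAR('a)) ?P) i = coeff ?P i"
    by simp
  then show "coeff ?P i ^ CHAR('a) = coeff ?P i"
    by (simp add: coeff_map_poly)
qed

lemma additive_poly_semilinear:
  fixes \<psi> :: "'a::comm_ring_1 \<Rightarrow> 'a"
  assumes "additive \<psi>"
    and semilinear: "\<And>b. \<psi> (z * b) = w * \<psi> b"
    and coeffs: "\<And>i. coeff P i \<in> range of_nat"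
  shows "\<psi> (poly P z * b) = poly P w * \<psi> b"
proof -
  interpret additive \<psi>
    by fact
  have of_nat: "\<psi> (of_nat k * b) = of_nat k * \<psi> b" for k b
    by (induction k) (simp_all add: zero add distrib_right)
  show ?thesis
    using coeffs
  proof (induction P arbitrary: b)
    case 0
    show ?case
      by (simp add: zero)
  next
    case (pCons a P)
    obtain k where "a = of_nat k"
      using pCons.prems[of 0] by auto
    moreover have "\<psi> (poly P z * b) = poly P w * \<psi> b" for b
      using pCons.IH pCons.prems by (metis coeff_pCons_Suc)
    ultimately show ?case
      by (simp add: distrib_right add of_nat semilinear mult.assoc)
  qed
qed

lemma semilinear_imp_conjugate:
  fixes \<psi> :: "'a::{finite,field} \<Rightarrow> 'a"
  assumes additive: "additive \<psi>"
    and nonzero: "\<psi> 1 \<noteq> 0"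
    and semilinear: "\<And>b. \<psi> (z * b) = w * \<psi> b"
  shows "w \<in> conjugates z"
proof -
  let ?P = "\<Prod>y\<in>conjugates z. [:- y, 1:]"
  have "z \<in> conjugates z"
    unfolding conjugates_def by (rule range_eqI[of _ _ 0]) simp
  then have "poly ?P z = 0"
    by (auto simp: poly_prod)
  then have "poly ?P w * \<psi> 1 = 0"
    using additive_poly_semilinear[OF additive semilinear coeff_conjugates_poly[of z], of 1]
      additive.zero[OF additive] by simp
  then show ?thesis
    using nonzero by (simp add: poly_prod)
qed

section \<open>Semilinear involutions\<close>

context field_endomorphism
begin

text \<open>\<open>U\<close> is a vector space over the fixed field of \<open>\<tau>\<^sup>2\<close>, on which \<open>\<psi>\<close> is a
  \<open>\<tau>\<close>-semilinear involution.\<close>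
definition semilinear_involution_on :: "'a set \<Rightarrow> ('a \<Rightarrow> 'a) \<Rightarrow> bool" where
  "semilinear_involution_on U \<psi> \<longleftrightarrow>
     0 \<in> U \<and> (\<forall>u\<in>U. \<forall>v\<in>U. u + v \<in> U \<and> \<psi> (u + v) = \<psi> u + \<psi> v)
     \<and> (\<forall>e u. \<tau> (\<tau> e) = e \<longrightarrow> u \<in> U \<longrightarrow> e * u \<in> U \<and> \<psi> (e * u) = \<tau> e * \<psi> u)
     \<and> (\<forall>u\<in>U. \<psi> u \<in> U \<and> \<psi> (\<psi> u) = u)"

lemma semilinear_involution_onD:
  assumes "semilinear_involution_on U \<psi>"
  shows "0 \<in> U"
    and "u \<in> U \<Longrightarrow> v \<in> U \<Longrightarrow> u + v \<in> U" "u \<in> U \<Longrightarrow> v \<in> U \<Longrightarrow> \<psi> (u + v) = \<psi> u + \<psi> v"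
    and "\<tau> (\<tau> e) = e \<Longrightarrow> u \<in> U \<Longrightarrow> e * u \<in> U" "\<tau> (\<tau> e) = e \<Longrightarrow> u \<in> U \<Longrightarrow> \<psi> (e * u) = \<tau> e * \<psi> u"
    and "u \<in> U \<Longrightarrow> \<psi> u \<in> U" "u \<in> U \<Longrightarrow> \<psi> (\<psi> u) = u"
  using assms unfolding semilinear_involution_on_def by blast+

lemma decomposition_unique:
  assumes U: "semilinear_involution_on U \<psi>" and "x \<notin> U"
    and "u \<in> U" "u' \<in> U" "\<tau> (\<tau> e) = e" "\<tau> (\<tau> e') = e'"
    and "u + e * x = u' + e' * x"
  shows "u = u' \<and> e = e'"
proof (rule ccontr)
  assume "\<not> (u = u' \<and> e = e')"
  with assms(7) have "e \<noteq> e'"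
    by auto
  have "\<tau> (\<tau> (- 1)) = - 1" and "\<tau> (\<tau> (inverse (e - e'))) = inverse (e - e')"
    using assms(5,6) by (simp_all add: minus inverse diff)
  then have "inverse (e - e') * (u' + (- 1) * u) \<in> U"
    using assms(3,4) by (intro semilinear_involution_onD(2,4)[OF U])
  moreover have "inverse (e - e') * (u' + (- 1) * u) = x"
    using assms(7) \<open>e \<noteq> e'\<close> by (simp add: field_simps)
  ultimately show False
    using assms(2) by simp
qed

lemma semilinear_extension:
  assumes "semilinear_involution_on U \<psi>" and "x \<notin> U"
  obtains \<psi>' where "\<And>u e. u \<in> U \<Longrightarrow> \<tau> (\<tau> e) = e \<Longrightarrow> \<psi>' (u + e * x) = \<psi> u + \<tau> e * x"
proof
  fix u e assume "u \<in> U" "\<tau> (\<tau> e) = e"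
  then show "(\<lambda>v. THE w. \<exists>u e. u \<in> U \<and> \<tau> (\<tau> e) = e \<and> v = u + e * x \<and> w = \<psi> u + \<tau> e * x)
      (u + e * x) = \<psi> u + \<tau> e * x"
    using decomposition_unique[OF assms] by (intro the_equality) blast+
qed

lemma semilinear_involution_on_extend:
  assumes U: "semilinear_involution_on U \<psi>" and x: "x \<notin> U"
  shows "\<exists>\<psi>'. semilinear_involution_on {u + e * x | u e. u \<in> U \<and> \<tau> (\<tau> e) = e} \<psi>'"
proof -
  let ?U' = "{u + e * x | u e. u \<in> U \<and> \<tau> (\<tau> e) = e}"
  obtain \<psi>' where \<psi>': "\<And>u e. u \<in> U \<Longrightarrow> \<tau> (\<tau> e) = e \<Longrightarrow> \<psi>' (u + e * x) = \<psi> u + \<tau> e * x"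
    using semilinear_extension[OF U x] by blast
  note U = semilinear_involution_onD[OF U]
  have "semilinear_involution_on ?U' \<psi>'"
    unfolding semilinear_involution_on_def
  proof (intro conjI ballI allI impI)
    show "0 \<in> ?U'"
      using U(1) by force
  next
    fix v w assume "v \<in> ?U'" "w \<in> ?U'"
    then obtain u e u' e' where v: "u \<in> U" "\<tau> (\<tau> e) = e" "v = u + e * x"
      and w: "u' \<in> U" "\<tau> (\<tau> e') = e'" "w = u' + e' * x"
      by blast
    have vw: "v + w = (u + u') + (e + e') * x" and e: "\<tau> (\<tau> (e + e')) = e + e'"
      using v w by (simp_all add: add algebra_simps)
    show "v + w \<in> ?U'"
      unfolding vw using U(2)[OF v(1) w(1)] e by blast
    show "\<psi>' (v + w) = \<psi>' v + \<psi>' w"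
      unfolding vw using v w U(2,3) e
      by (simp add: \<psi>' add) (simp add: algebra_simps)
  next
    fix f v assume f: "\<tau> (\<tau> f) = f" and "v \<in> ?U'"
    then obtain u e where v: "u \<in> U" "\<tau> (\<tau> e) = e" "v = u + e * x"
      by blast
    have fv: "f * v = f * u + (f * e) * x" and e: "\<tau> (\<tau> (f * e)) = f * e"
      using f v by (simp_all add: mult algebra_simps)
    show "f * v \<in> ?U'"
      unfolding fv using U(4)[OF f v(1)] e by blast
    show "\<psi>' (f * v) = \<tau> f * \<psi>' v"
      unfolding fv using f v U(4,5) e
      by (simp add: \<psi>' mult) (simp add: algebra_simps)
  next
    fix v assume "v \<in> ?U'"
    then obtain u e where v: "u \<in> U" "\<tau> (\<tau> e) = e" "v = u + e * x"
      by blast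
    have image: "\<psi>' v = \<psi> u + \<tau> e * x" and "\<psi> u \<in> U" and "\<tau> (\<tau> (\<tau> e)) = \<tau> e"
      using v U(6) by (simp_all add: \<psi>')
    then show "\<psi>' v \<in> ?U'"
      by blast
    show "\<psi>' (\<psi>' v) = v"
      using v U(6,7) by (simp add: image \<psi>')
  qed
  then show ?thesis
    by blast
qed

lemma semilinear_involution_exists:
  assumes "finite (UNIV :: 'a set)"
  shows "\<exists>\<psi>. semilinear_involution_on UNIV \<psi>"
proof -
  have finite: "finite A" for A :: "'a set"
    using assms by (rule finite_subset[OF subset_UNIV])
  let ?P = "\<lambda>U\<psi>. semilinear_involution_on (fst U\<psi>) (snd U\<psi>)"
  have "?P ({0}, \<lambda>_. 0)"
    by (simp add: semilinear_involution_on_def)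
  moreover have "\<forall>V\<phi>. ?P V\<phi> \<longrightarrow> (card \<circ> fst) V\<phi> < Suc (card (UNIV :: 'a set))"
    by (simp add: le_imp_less_Suc card_mono[OF assms])
  ultimately obtain U\<psi> where good: "?P U\<psi>"
    and maximal: "\<And>V\<phi>. ?P V\<phi> \<Longrightarrow> card (fst V\<phi>) \<le> card (fst U\<psi>)"
    using Lattices_Big.ex_has_greatest_nat[of ?P _ "card \<circ> fst"] by (metis comp_apply)
  define U where "U = fst U\<psi>"
  have "U = UNIV"
  proof (rule ccontr)
    assume "U \<noteq> UNIV"
    then obtain x where x: "x \<notin> U"
      by blast
    let ?U' = "{u + e * x | u e. u \<in> U \<and> \<tau> (\<tau> e) = e}"
    obtain \<psi>' where "semilinear_involution_on ?U' \<psi>'"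
      using semilinear_involution_on_extend[OF good[folded U_def] x] by blast
    then have "card ?U' \<le> card U"
      using maximal[of "(?U', \<psi>')"] by (simp add: U_def)
    have "\<tau> (\<tau> 0) = 0" and "\<tau> (\<tau> 1) = 1"
      by simp_all
    then have "u + 0 * x \<in> ?U'" if "u \<in> U" for u
      using that by blast
    moreover have "0 + 1 * x \<in> ?U'"
      using semilinear_involution_onD(1)[OF good[folded U_def]] \<open>\<tau> (\<tau> 1) = 1\<close> by blast
    ultimately have "insert x U \<subseteq> ?U'"
      by auto
    then have "card (insert x U) \<le> card ?U'"
      by (rule card_mono[OF finite])
    also have "\<dots> \<le> card U"
      by fact
    finally show False
      using x finite[of U] by simp
  qed
  with good show ?thesis
    unfolding U_def by (intro exI[of _ "snd U\<psi>"]) simp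
qed

end

section \<open>The affine group\<close>

definition aff :: "'a::field \<Rightarrow> 'a \<Rightarrow> 'a \<Rightarrow> 'a" where
  "aff a b = (\<lambda>x. a * x + b)"

definition slope :: "('a::field \<Rightarrow> 'a) \<Rightarrow> 'a" where
  "slope f = f 1 - f 0"

lemma aff_apply_0 [simp]: "aff a b 0 = b"
  and slope_aff [simp]: "slope (aff a b) = a"
  by (simp_all add: aff_def slope_def)

lemma aff_eq_iff [simp]: "aff a b = aff a' b' \<longleftrightarrow> a = a' \<and> b = b'"
  by (metis aff_apply_0 slope_aff)

lemma carrier_affine_group:
  "f \<in> carrier (affine_group d) \<longleftrightarrow> slope f ^ d = 1 \<and> f = aff (slope f) (f 0)"
  by (auto simp: affine_group_def aff_def slope_def)

lemma aff_in_carrier [simp]: "aff a b \<in> carrier (affine_group d) \<longleftrightarrow> a ^ d = 1"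
  by (simp add: carrier_affine_group)

lemma carrier_affine_groupE:
  assumes "f \<in> carrier (affine_group d)"
  obtains a b where "a ^ d = 1" and "f = aff a b"
  using assms carrier_affine_group by blast

lemma mult_aff [simp]: "aff a b \<otimes>\<^bsub>affine_group d\<^esub> aff a' b' = aff (a * a') (a * b' + b)"
  by (simp add: affine_group_def aff_def fun_eq_iff algebra_simps)

lemma one_affine_group: "\<one>\<^bsub>affine_group d\<^esub> = aff 1 0"
  by (simp add: affine_group_def aff_def fun_eq_iff)

lemma group_affine_group:
  assumes "d > 0"
  shows "group (affine_group d :: ('a::field \<Rightarrow> 'a) monoid)"
proof (rule groupI)
  fix f assume "f \<in> carrier (affine_group d :: ('a \<Rightarrow> 'a) monoid)"
  then obtain a b :: 'a where ab: "a ^ d = 1" "f = aff a b"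
    by (rule carrier_affine_groupE)
  with assms have "a \<noteq> 0"
    by (cases d) auto
  with ab show "\<exists>g\<in>carrier (affine_group d). g \<otimes>\<^bsub>affine_group d\<^esub> f = \<one>\<^bsub>affine_group d\<^esub>"
    by (intro bexI[of _ "aff (inverse a) (- (inverse a * b))"])
       (auto simp: one_affine_group power_inverse)
qed (auto elim!: carrier_affine_groupE simp: one_affine_group power_mult_distrib algebra_simps)

lemma inv_aff:
  assumes "d > 0" and "a ^ d = 1"
  shows "inv\<^bsub>affine_group d\<^esub> aff a b = aff (inverse a) (- (inverse a * b))"
proof -
  interpret group "affine_group d :: ('a::field \<Rightarrow> 'a) monoid"
    using assms(1) by (rule group_affine_group)
  from assms have "a \<noteq> 0"
    by (cases d) auto
  with assms show ?thesis
    by (intro inv_equality) (auto simp: one_affine_group power_inverse)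
qed

lemma slope_mult:
  assumes "f \<in> carrier (affine_group d)" and "g \<in> carrier (affine_group d)"
  shows "slope (f \<otimes>\<^bsub>affine_group d\<^esub> g) = slope f * slope g"
  using assms by (auto elim!: carrier_affine_groupE)

lemma slope_one [simp]: "slope \<one>\<^bsub>affine_group d\<^esub> = 1"
  by (simp add: one_affine_group)

lemma slope_inv:
  assumes "d > 0" and "f \<in> carrier (affine_group d)"
  shows "slope (inv\<^bsub>affine_group d\<^esub> f) = inverse (slope f)"
  using assms(2) by (auto elim!: carrier_affine_groupE simp: inv_aff[OF assms(1)])

lemma slope_pow:
  assumes "d > 0" and "f \<in> carrier (affine_group d)"
  shows "slope (f [^]\<^bsub>affine_group d\<^esub> (m::nat)) = slope f ^ m"
proof -
  interpret group "affine_group d :: ('a::field \<Rightarrow> 'a) monoid"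
    using assms(1) by (rule group_affine_group)
  show ?thesis
    by (induction m) (simp_all add: assms(2) slope_mult)
qed

lemma pow_translation: "aff 1 b [^]\<^bsub>affine_group d\<^esub> (m::nat) = aff 1 (of_nat m * b)"
  by (induction m) (simp_all add: one_affine_group algebra_simps)

lemma subgroup_with_dilations:
  assumes d_pos: "d > 0" and H: "subgroup H (affine_group d)"
    and dilation: "\<And>a. a ^ d = 1 \<Longrightarrow> aff a 0 \<in> H"
  shows "aff 1 u \<in> H \<Longrightarrow> aff 1 v \<in> H \<Longrightarrow> aff 1 (u + v) \<in> H"
    and "aff 1 u \<in> H \<Longrightarrow> aff 1 (- u) \<in> H"
    and "a ^ d = 1 \<Longrightarrow> aff 1 u \<in> H \<Longrightarrow> aff 1 (a * u) \<in> H"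
    and "(\<And>v. aff 1 v \<in> H) \<Longrightarrow> carrier (affine_group d) \<subseteq> H"
proof -
  let ?G = "affine_group d :: ('a::field \<Rightarrow> 'a) monoid"
  show "aff 1 (u + v) \<in> H" if "aff 1 u \<in> H" "aff 1 v \<in> H"
    using subgroup.m_closed[OF H that(2,1)] by (simp add: add.commute)
  show "aff 1 (- u) \<in> H" if "aff 1 u \<in> H"
    using subgroup.m_inv_closed[OF H that] by (simp add: inv_aff[OF d_pos])
  show "aff 1 (a * u) \<in> H" if "a ^ d = 1" "aff 1 u \<in> H"
  proof -
    have "a \<noteq> 0"
      using that(1) d_pos by (cases d) auto
    have "aff a 0 \<otimes>\<^bsub>?G\<^esub> aff 1 u \<otimes>\<^bsub>?G\<^esub> inv\<^bsub>?G\<^esub> aff a 0 \<in> H"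
      using H that dilation by (intro subgroup.m_closed subgroup.m_inv_closed)
    with \<open>a \<noteq> 0\<close> that(1) show ?thesis
      by (simp add: inv_aff[OF d_pos])
  qed
  show "carrier ?G \<subseteq> H" if translation: "\<And>v. aff 1 v \<in> H"
  proof
    fix f assume "f \<in> carrier ?G"
    then obtain a b where a: "a ^ d = 1" and f: "f = aff a b"
      by (rule carrier_affine_groupE)
    have "aff 1 b \<otimes>\<^bsub>?G\<^esub> aff a 0 \<in> H"
      using translation dilation[OF a] by (rule subgroup.m_closed[OF H])
    then show "f \<in> H"
      by (simp add: f)
  qed
qed

section \<open>Automorphisms of the affine group\<close>

lemma automorphism_fixes_slope_of_translation:
  fixes \<sigma> :: "('a::{finite,field} \<Rightarrow> 'a) \<Rightarrow> 'a \<Rightarrow> 'a"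
  assumes d: "d dvd card (UNIV :: 'a set) - 1"
    and hom: "\<sigma> \<in> hom (affine_group d) (affine_group d)"
  shows "slope (\<sigma> (aff 1 b)) = 1"
proof -
  let ?G = "affine_group d :: ('a \<Rightarrow> 'a) monoid"
  let ?p = "CHAR('a)"
  have d_pos: "d > 0"
    using d by (rule pos_if_dvd_card_minus_one)
  interpret group ?G
    using d_pos by (rule group_affine_group)
  have "coprime (card (UNIV :: 'a set) - 1) (card (UNIV :: 'a set))"
    using coprime_diff_one_left_nat[of "card (UNIV :: 'a set)"] card_UNIV_field_ge_2[where 'a='a]
    by simp
  then have coprime: "coprime d ?p"
    using d CHAR_dvd_CARD[where 'a='a] by (rule coprime_divisors[rotated 2])
  have image: "\<sigma> (aff 1 b) \<in> carrier ?G"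
    using hom by (simp add: hom_in_carrier)
  then have "slope (\<sigma> (aff 1 b)) ^ d = 1"
    by (simp add: carrier_affine_group)
  moreover have "slope (\<sigma> (aff 1 b)) ^ ?p = 1"
  proof -
    have "aff 1 b [^]\<^bsub>?G\<^esub> ?p = \<one>\<^bsub>?G\<^esub>"
      by (simp add: pow_translation one_affine_group)
    then have "\<sigma> (aff 1 b) [^]\<^bsub>?G\<^esub> ?p = \<one>\<^bsub>?G\<^esub>"
      using hom_nat_pow[OF hom, of "aff 1 b" ?p] hom_one[OF hom] by simp
    then show ?thesis
      by (simp flip: slope_pow[OF d_pos image])
  qed
  ultimately show ?thesis
    using power_eq_one_if_coprime[OF coprime d_pos] by blast
qed

locale affine_automorphism =
  fixes d :: nat and \<sigma> :: "('a::field \<Rightarrow> 'a) \<Rightarrow> 'a \<Rightarrow> 'a"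
  assumes d_pos: "d > 0"
    and iso: "\<sigma> \<in> iso (affine_group d) (affine_group d)"
    and slope_translation: "slope (\<sigma> (aff 1 b)) = 1"
begin

sublocale group_hom "affine_group d" "affine_group d" \<sigma>
  using d_pos iso by (intro group_hom.intro group_hom_axioms.intro group_affine_group) (simp_all add: iso_def)

definition translation_part :: "'a \<Rightarrow> 'a" where
  "translation_part b = \<sigma> (aff 1 b) 0"

lemma image_translation: "\<sigma> (aff 1 b) = aff 1 (translation_part b)"
  using hom_closed[of "aff 1 b"] slope_translation[of b]
  by (simp add: carrier_affine_group translation_part_def)

lemma additive_translation_part: "additive translation_part"
proof
  fix b b'
  show "translation_part (b + b') = translation_part b + translation_part b'"
    using hom_mult[of "aff 1 b'" "aff 1 b"] by (simp add: image_translation add.commute)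
qed

lemma translation_part_one_nonzero: "translation_part 1 \<noteq> 0"
proof
  assume "translation_part 1 = 0"
  moreover have "\<sigma> (aff 1 0) = aff 1 0"
    using hom_one by (simp add: one_affine_group)
  ultimately have "\<sigma> (aff 1 1) = \<sigma> (aff 1 0)"
    by (simp add: image_translation)
  moreover have "inj_on \<sigma> (carrier (affine_group d))"
    using iso by (simp add: iso_def bij_betw_def)
  ultimately have "aff 1 1 = aff (1::'a) 0"
    by (elim inj_onD) simp_all
  then show False
    by simp
qed

text \<open>Conjugating a translation by \<open>x \<mapsto> a x\<close> multiplies it by \<open>a\<close>; applying \<open>\<sigma>\<close> to this
  relation makes the translation part semilinear over the slope of \<open>\<sigma>\<close>.\<close>
lemma translation_part_semilinear:
  assumes "a ^ d = 1"
  shows "translation_part (a * b) = slope (\<sigma> (aff a 0)) * translation_part b"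
proof -
  have "\<sigma> (aff a 0) \<in> carrier (affine_group d)"
    using assms by (simp add: hom_closed)
  then obtain a' c where a'c: "\<sigma> (aff a 0) = aff a' c"
    by (auto elim: carrier_affine_groupE)
  have "aff a 0 \<otimes>\<^bsub>affine_group d\<^esub> aff 1 b = aff 1 (a * b) \<otimes>\<^bsub>affine_group d\<^esub> aff a 0"
    by simp
  then have "\<sigma> (aff a 0) \<otimes>\<^bsub>affine_group d\<^esub> \<sigma> (aff 1 b)
      = \<sigma> (aff 1 (a * b)) \<otimes>\<^bsub>affine_group d\<^esub> \<sigma> (aff a 0)"
    using assms by (simp flip: hom_mult)
  then show ?thesis
    by (simp add: a'c image_translation add.commute)
qed

lemma GI_imp_slope_inverse:
  assumes "GI_automorphism (affine_group d) \<sigma>" and "f \<in> carrier (affine_group d)"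
  shows "slope (\<sigma> f) = inverse (slope f)"
proof -
  define K where "K = {f \<in> carrier (affine_group d). slope (\<sigma> f) = inverse (slope f)}"
  have "subgroup K (affine_group d)"
  proof (rule G.subgroupI)
    show "K \<subseteq> carrier (affine_group d)"
      by (auto simp: K_def)
    have "\<one>\<^bsub>affine_group d\<^esub> \<in> K"
      by (simp add: K_def)
    then show "K \<noteq> {}"
      by blast
  next
    fix f g assume "f \<in> K" "g \<in> K"
    then show "f \<otimes>\<^bsub>affine_group d\<^esub> g \<in> K"
      by (simp add: K_def slope_mult)
  next
    fix f assume "f \<in> K"
    then show "inv\<^bsub>affine_group d\<^esub> f \<in> K"
      by (simp add: K_def slope_inv[OF d_pos])
  qed
  moreover have "{g \<in> carrier (affine_group d). \<sigma> g = inv\<^bsub>affine_group d\<^esub> g} \<subseteq> K"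
    by (auto simp: K_def slope_inv[OF d_pos])
  ultimately have "generate (affine_group d) {g \<in> carrier (affine_group d). \<sigma> g = inv\<^bsub>affine_group d\<^esub> g} \<subseteq> K"
    by (rule G.generate_subgroup_incl[rotated])
  then have "carrier (affine_group d) \<subseteq> K"
    using assms(1) by (simp add: GI_automorphism_def)
  then show ?thesis
    using assms(2) by (auto simp: K_def)
qed

end

lemma GI_automorphism_imp_cong_minus_one:
  fixes \<sigma> :: "('a::{finite,field} \<Rightarrow> 'a) \<Rightarrow> 'a \<Rightarrow> 'a"
  assumes d: "d dvd card (UNIV :: 'a set) - 1" and GI: "GI_automorphism (affine_group d) \<sigma>"
  shows "\<exists>l. [int CHAR('a) ^ l = - 1] (mod int d)"
proof -
  have iso: "\<sigma> \<in> iso (affine_group d) (affine_group d)"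
    using GI by (simp add: GI_automorphism_def)
  then have "\<sigma> \<in> hom (affine_group d) (affine_group d)"
    by (simp add: iso_def)
  with iso interpret affine_automorphism d \<sigma>
    by unfold_locales
       (simp_all add: pos_if_dvd_card_minus_one[OF d] automorphism_fixes_slope_of_translation[OF d])
  obtain z :: 'a where z: "\<And>j. z ^ j = 1 \<longleftrightarrow> d dvd j"
    using finite_field_root_of_unity[OF d] by blast
  then have "z ^ d = 1"
    by simp
  then have "translation_part (z * b) = inverse z * translation_part b" for b
    using GI_imp_slope_inverse[OF GI, of "aff z 0"] by (simp add: translation_part_semilinear)
  then have "inverse z \<in> conjugates z"
    by (rule semilinear_imp_conjugate[OF additive_translation_part translation_part_one_nonzero])
  then obtain i where i: "inverse z = z ^ (CHAR('a) ^ i)"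
    by (auto simp: conjugates_def)
  have "z \<noteq> 0"
    using \<open>z ^ d = 1\<close> d_pos by (cases d) auto
  have "z ^ (CHAR('a) ^ i + 1) = inverse z * z"
    by (simp add: i mult.commute)
  also have "\<dots> = 1"
    using \<open>z \<noteq> 0\<close> by simp
  finally have "d dvd CHAR('a) ^ i + 1"
    by (simp only: z)
  then have "int d dvd int (CHAR('a) ^ i + 1)"
    by (simp only: of_nat_dvd_iff)
  then have "[int CHAR('a) ^ i = - 1] (mod int d)"
    by (simp add: cong_iff_dvd_diff add.commute)
  then show ?thesis ..
qed

section \<open>GI-automorphisms from semilinear involutions\<close>

definition affine_inversion :: "('a::field \<Rightarrow> 'a) \<Rightarrow> ('a \<Rightarrow> 'a) \<Rightarrow> 'a \<Rightarrow> 'a" where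
  "affine_inversion \<psi> f = aff (inverse (slope f)) (- \<psi> (f 0))"

lemma affine_inversion_aff [simp]: "affine_inversion \<psi> (aff a b) = aff (inverse a) (- \<psi> b)"
  by (simp add: affine_inversion_def)

lemma affine_inversion_iso:
  fixes \<psi> :: "'a::field \<Rightarrow> 'a"
  assumes "additive \<psi>"
    and involutive: "\<And>u. \<psi> (\<psi> u) = u"
    and semilinear: "\<And>a u. a ^ d = 1 \<Longrightarrow> \<psi> (a * u) = inverse a * \<psi> u"
  shows "affine_inversion \<psi> \<in> iso (affine_group d) (affine_group d)"
proof -
  interpret additive \<psi>
    by fact
  let ?G = "affine_group d :: ('a \<Rightarrow> 'a) monoid"
  have closed: "affine_inversion \<psi> f \<in> carrier ?G" if "f \<in> carrier ?G" for f
    using that by (auto elim!: carrier_affine_groupE simp: power_inverse)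
  have "affine_inversion \<psi> \<in> hom ?G ?G"
  proof (rule homI)
    fix f g assume "f \<in> carrier ?G" "g \<in> carrier ?G"
    then show "affine_inversion \<psi> (f \<otimes>\<^bsub>?G\<^esub> g) = affine_inversion \<psi> f \<otimes>\<^bsub>?G\<^esub> affine_inversion \<psi> g"
      by (auto elim!: carrier_affine_groupE simp: add semilinear minus algebra_simps)
  qed (rule closed)
  moreover have "bij_betw (affine_inversion \<psi>) (carrier ?G) (carrier ?G)"
    by (rule bij_betwI[where g = "affine_inversion \<psi>"])
       (auto intro: closed elim!: carrier_affine_groupE simp: minus involutive)
  ultimately show ?thesis
    by (simp add: iso_def)
qed

text \<open>The fixed points \<open>u + \<psi>(u)\<close> and \<open>z \<psi>(u) + \<psi>(z \<psi>(u))\<close> combine to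
  \<open>z (u + \<psi>(u)) - (z \<psi>(u) + \<psi>(z \<psi>(u))) = (z - z\<^sup>-\<^sup>1) u\<close>, and \<open>z - z\<^sup>-\<^sup>1 \<noteq> 0\<close>
  unless \<open>z\<^sup>2 = 1\<close>.\<close>
lemma span_fixed_points_semilinear_involution:
  fixes \<psi> :: "'a::field \<Rightarrow> 'a"
  assumes "additive \<psi>"
    and involutive: "\<And>u. \<psi> (\<psi> u) = u"
    and semilinear: "\<And>u. \<psi> (z * u) = inverse z * \<psi> u"
    and z: "z \<noteq> 0" "z ^ 2 \<noteq> 1"
    and fixed: "\<And>w. \<psi> w = w \<Longrightarrow> w \<in> V"
    and V_add: "\<And>u v. u \<in> V \<Longrightarrow> v \<in> V \<Longrightarrow> u + v \<in> V"
    and V_minus: "\<And>u. u \<in> V \<Longrightarrow> - u \<in> V"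
    and V_mult: "\<And>u. u \<in> V \<Longrightarrow> z * u \<in> V"
  shows "v \<in> V"
proof -
  interpret additive \<psi>
    by fact
  define c where "c = z - inverse z"
  have "c \<noteq> 0"
  proof
    assume "c = 0"
    then have "z * z = z * inverse z"
      by (simp add: c_def)
    with z show False
      by (simp add: power2_eq_square)
  qed
  have "c * y \<in> V" for y
  proof -
    have "\<psi> y + \<psi> (\<psi> y) \<in> V" and "z * \<psi> y + \<psi> (z * \<psi> y) \<in> V"
      by (rule fixed; simp add: add involutive add.commute)+
    then have "z * (\<psi> y + \<psi> (\<psi> y)) + - (z * \<psi> y + \<psi> (z * \<psi> y)) \<in> V"
      by (blast intro: V_add V_mult V_minus)
    then show ?thesis
      by (simp add: c_def semilinear involutive algebra_simps)
  qed
  from this[of "inverse c * v"] show ?thesis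
    using \<open>c \<noteq> 0\<close> by (simp add: mult.assoc[symmetric])
qed

lemma GI_automorphism_affine_inversion:
  fixes \<psi> :: "'a::field \<Rightarrow> 'a"
  assumes d_pos: "d > 0"
    and additive: "additive \<psi>"
    and involutive: "\<And>u. \<psi> (\<psi> u) = u"
    and semilinear: "\<And>a u. a ^ d = 1 \<Longrightarrow> \<psi> (a * u) = inverse a * \<psi> u"
    and nondegenerate: "(\<forall>u. \<psi> u = u) \<or> (\<exists>z::'a. z ^ d = 1 \<and> z ^ 2 \<noteq> 1)"
  shows "GI_automorphism (affine_group d) (affine_inversion \<psi>)"
proof -
  let ?G = "affine_group d :: ('a \<Rightarrow> 'a) monoid"
  interpret G: group ?G
    using d_pos by (rule group_affine_group)
  define H where "H = generate ?G {f \<in> carrier ?G. affine_inversion \<psi> f = inv\<^bsub>?G\<^esub> f}"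
  have H: "subgroup H ?G"
    unfolding H_def by (rule G.generate_is_subgroup) blast
  have inverted: "f \<in> H" if "f \<in> carrier ?G" and "affine_inversion \<psi> f = inv\<^bsub>?G\<^esub> f" for f
    using that unfolding H_def by (auto intro: generate.incl)
  have dilation: "aff a 0 \<in> H" if "a ^ d = 1" for a
    using that additive.zero[OF additive] by (intro inverted) (simp_all add: inv_aff[OF d_pos])
  note closure = subgroup_with_dilations[OF d_pos H, OF dilation]
  have fixed: "aff 1 w \<in> H" if "\<psi> w = w" for w
    using that by (intro inverted) (simp_all add: inv_aff[OF d_pos])
  have translation: "aff 1 v \<in> H" for v
    using nondegenerate
  proof
    assume "\<forall>u. \<psi> u = u"
    then show ?thesis
      by (simp add: fixed)
  next
    assume "\<exists>z::'a. z ^ d = 1 \<and> z ^ 2 \<noteq> 1"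
    then obtain z :: 'a where z: "z ^ d = 1" "z ^ 2 \<noteq> 1"
      by blast
    then have "z \<noteq> 0"
      using d_pos by (cases d) auto
    have "v \<in> {u. aff 1 u \<in> H}"
      by (rule span_fixed_points_semilinear_involution[OF additive involutive semilinear[OF z(1)]
            \<open>z \<noteq> 0\<close> z(2)]) (simp_all add: fixed closure(1-3) z(1))
    then show ?thesis
      by simp
  qed
  have "carrier ?G \<subseteq> H"
    using translation by (intro closure(4)) simp_all
  then show ?thesis
    using affine_inversion_iso[OF additive involutive semilinear] subgroup.subset[OF H]
    unfolding GI_automorphism_def H_def by blast
qed

lemma GI_automorphism_affine_inversion_id:
  assumes "d > 0" and "d dvd 2"
  shows "GI_automorphism (affine_group d) (affine_inversion (id :: 'a::field \<Rightarrow> 'a))"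
proof -
  obtain m where m: "2 = d * m"
    using assms(2) by (elim dvdE)
  have "inverse a = a" if "a ^ d = 1" for a :: 'a
  proof (rule inverse_unique)
    have "a * a = a ^ (d * m)"
      by (simp flip: m add: power2_eq_square)
    then show "a * a = 1"
      using that by (simp add: power_mult)
  qed
  then show ?thesis
    by (intro GI_automorphism_affine_inversion[OF assms(1)]) (simp_all add: additive.intro)
qed

lemma GI_automorphism_if_frobenius_inverts_roots:
  fixes z :: "'a::{finite,field}"
  assumes d_pos: "d > 0"
    and inverts: "\<And>a::'a. a ^ d = 1 \<Longrightarrow> a ^ (CHAR('a) ^ l) = inverse a"
    and z: "z ^ d = 1" "z ^ 2 \<noteq> 1"
  shows "\<exists>\<sigma>. GI_automorphism (affine_group d :: ('a \<Rightarrow> 'a) monoid) \<sigma>"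
proof -
  let ?N = "CHAR('a) ^ l"
  interpret frobenius: field_endomorphism "\<lambda>x::'a. x ^ ?N"
    by (rule field_endomorphism_frobenius[OF prime_CHAR_finite_field])
  obtain \<psi> where "frobenius.semilinear_involution_on UNIV \<psi>"
    using frobenius.semilinear_involution_exists[OF finite_UNIV] by blast
  then have additive: "additive \<psi>" and involutive: "\<And>u. \<psi> (\<psi> u) = u"
    and twisted: "\<And>e u. (e ^ ?N) ^ ?N = e \<Longrightarrow> \<psi> (e * u) = e ^ ?N * \<psi> u"
    unfolding frobenius.semilinear_involution_on_def by (auto intro: additive.intro)
  have "\<psi> (a * u) = inverse a * \<psi> u" if "a ^ d = 1" for a u
    using twisted[of a u] inverts[OF that] by (simp add: power_inverse)
  with z have "GI_automorphism (affine_group d) (affine_inversion \<psi>)"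
    by (intro GI_automorphism_affine_inversion[OF d_pos additive involutive]) blast+
  then show ?thesis
    by blast
qed

lemma cong_minus_one_imp_GI_automorphism:
  assumes d: "d dvd card (UNIV :: 'a::{finite,field} set) - 1"
    and cong: "[int CHAR('a) ^ l = - 1] (mod int d)"
  shows "\<exists>\<sigma>. GI_automorphism (affine_group d :: ('a \<Rightarrow> 'a) monoid) \<sigma>"
proof -
  have d_pos: "d > 0"
    using d by (rule pos_if_dvd_card_minus_one)
  have "int d dvd int (CHAR('a) ^ l + 1)"
    using cong by (simp add: cong_iff_dvd_diff add.commute)
  then obtain k where k: "CHAR('a) ^ l + 1 = d * k"
    by (auto simp only: of_nat_dvd_iff elim: dvdE)
  have inverts: "a ^ (CHAR('a) ^ l) = inverse a" if "a ^ d = 1" for a :: 'a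
  proof -
    have "a * a ^ (CHAR('a) ^ l) = a ^ (d * k)"
      by (simp flip: k)
    also have "\<dots> = 1"
      using that by (simp add: power_mult)
    finally show ?thesis
      by (rule inverse_unique[symmetric])
  qed
  obtain z :: 'a where z: "\<And>j. z ^ j = 1 \<longleftrightarrow> d dvd j"
    using finite_field_root_of_unity[OF d] by blast
  show ?thesis
  proof (cases "d dvd 2")
    case True
    then show ?thesis
      using GI_automorphism_affine_inversion_id[OF d_pos] by blast
  next
    case False
    then show ?thesis
      by (intro GI_automorphism_if_frobenius_inverts_roots[OF d_pos inverts, of z]) (simp_all add: z)
  qed
qed

theorem theorem3p6:
  fixes p n d :: nat
  assumes "Factorial_Ring.prime p"
    and "card (UNIV :: ('a::{finite,field}) set) = p ^ n"
    and "d > 0" and "d dvd p ^ n - 1"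
  shows "(\<exists>\<sigma>. GI_automorphism (affine_group d :: ('a \<Rightarrow> 'a) monoid) \<sigma>)
         \<longleftrightarrow> (\<exists>l::nat. [int p ^ l = - 1] (mod int d))"
proof -
  have p: "CHAR('a) = p"
    using assms(1,2) by (rule CHAR_eq_prime_of_card)
  have d: "d dvd card (UNIV :: 'a set) - 1"
    using assms(2,4) by simp
  show ?thesis
  proof
    assume "\<exists>\<sigma>. GI_automorphism (affine_group d :: ('a \<Rightarrow> 'a) monoid) \<sigma>"
    then obtain \<sigma> where "GI_automorphism (affine_group d :: ('a \<Rightarrow> 'a) monoid) \<sigma>"
      by blast
    from GI_automorphism_imp_cong_minus_one[OF d this]
    show "\<exists>l::nat. [int p ^ l = - 1] (mod int d)"
      by (simp add: p)
  next
    assume "\<exists>l::nat. [int p ^ l = - 1] (mod int d)"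
    then obtain l :: nat where "[int CHAR('a) ^ l = - 1] (mod int d)"
      by (auto simp: p)
    then show "\<exists>\<sigma>. GI_automorphism (affine_group d :: ('a \<Rightarrow> 'a) monoid) \<sigma>"
      by (rule cong_minus_one_imp_GI_automorphism[OF d])
  qed
qed

end
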